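(* Let $U$ be a compatible basis transform of $\mathbb{R}^{\{-1,1\}^n}$. Then $\deg_U(f)=\deg(f)$ for every $f\in\mathbb{R}^{\{-1,1\}^n}$.
   Context: $\mathbb{R}^{\{-1,1\}^n}$ is the real vector space of all functions $\{-1,1\}^n\to\mathbb{R}$; each $f$ has a unique expansion $f=\sum_{S\subseteq[n]}\hat f(S)\chi_S$, $\chi_S(x)=\prod_{i\in S}x_i$, and $\deg(f)=\max\{|S|:\hat f(S)\ne0\}$. A basis transform is an invertible linear map $U$ on $\mathbb{R}^{\{-1,1\}^n}$; the degree of $f$ under $U$ is $\deg_U(f):=\max\{\deg(U^{-1}(\chi_S)):\hat f(S)\ne0\}$. $U$ is compatible if $\deg(U(\chi_S))=|S|$ for every $S\subseteq[n]$. *)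

theory Defs
  imports Complex_Main
begin

text \<open>Points of the cube {-1,1}^n are functions x :: nat => real with x i in {-1,1}
  for i < n and the normalisation x i = 1 for i >= n.\<close>

definition cube :: "nat \<Rightarrow> (nat \<Rightarrow> real) set" where
  "cube n = {x. (\<forall>i<n. x i = -1 \<or> x i = 1) \<and> (\<forall>i\<ge>n. x i = 1)}"

definition fspace :: "nat \<Rightarrow> ((nat \<Rightarrow> real) \<Rightarrow> real) set" where
  "fspace n = {f. \<forall>x. x \<notin> cube n \<longrightarrow> f x = 0}"

definition chi :: "nat \<Rightarrow> nat set \<Rightarrow> (nat \<Rightarrow> real) \<Rightarrow> real" where
  "chi n S = (\<lambda>x. if x \<in> cube n then (\<Prod>i\<in>S. x i) else 0)"

definition fourier :: "nat \<Rightarrow> ((nat \<Rightarrow> real) \<Rightarrow> real) \<Rightarrow> nat set \<Rightarrow> real" where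
  "fourier n f S = (\<Sum>x\<in>cube n. f x * chi n S x) / 2 ^ n"

text \<open>Degree; the zero function gets degree 0 by convention (max over {0}).\<close>
definition deg :: "nat \<Rightarrow> ((nat \<Rightarrow> real) \<Rightarrow> real) \<Rightarrow> nat" where
  "deg n f = Max ({card S | S. S \<subseteq> {..<n} \<and> fourier n f S \<noteq> 0} \<union> {0})"

definition basis_transform :: "nat \<Rightarrow> (((nat \<Rightarrow> real) \<Rightarrow> real) \<Rightarrow> ((nat \<Rightarrow> real) \<Rightarrow> real)) \<Rightarrow> bool" where
  "basis_transform n U \<longleftrightarrow>
     (\<forall>f\<in>fspace n. \<forall>g\<in>fspace n. U (\<lambda>x. f x + g x) = (\<lambda>x. U f x + U g x)) \<and>
     (\<forall>f\<in>fspace n. \<forall>c::real. U (\<lambda>x. c * f x) = (\<lambda>x. c * U f x)) \<and>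
     bij_betw U (fspace n) (fspace n)"

definition degU :: "nat \<Rightarrow> (((nat \<Rightarrow> real) \<Rightarrow> real) \<Rightarrow> ((nat \<Rightarrow> real) \<Rightarrow> real))
    \<Rightarrow> ((nat \<Rightarrow> real) \<Rightarrow> real) \<Rightarrow> nat" where
  "degU n U f = Max ({deg n (inv_into (fspace n) U (chi n S)) | S. S \<subseteq> {..<n} \<and> fourier n f S \<noteq> 0} \<union> {0})"

definition compatible :: "nat \<Rightarrow> (((nat \<Rightarrow> real) \<Rightarrow> real) \<Rightarrow> ((nat \<Rightarrow> real) \<Rightarrow> real)) \<Rightarrow> bool" where
  "compatible n U \<longleftrightarrow> (\<forall>S. S \<subseteq> {..<n} \<longrightarrow> deg n (U (chi n S)) = card S)"

end

theory Submission
  imports Defs "HOL-Library.Function_Algebras"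
begin

text \<open>Let V(d) be the span of the characters chi(T) with |T| \<le> d, which is exactly the
  space of functions of degree at most d. Compatibility says that U maps V(d) into itself;
  since U is injective and V(d) is finite-dimensional, U maps V(d) onto itself. Hence the
  preimage of chi(S) lies in V(|S|); and if it lay in V(d) for some d < |S|, then so would
  its image chi(S), which has degree |S|. So the preimage of chi(S) has degree exactly |S|,
  and deg_U f = deg f.\<close>

lemma cube_0: "cube 0 = {\<lambda>_. 1}"
  by (auto simp: cube_def)

lemma cube_Suc: "cube (Suc n) = (\<lambda>(x, b). x(n := b)) ` (cube n \<times> {-1, 1})"
proof (rule set_eqI, rule iffI)
  fix y assume y: "y \<in> cube (Suc n)"
  have "y(n := 1) \<in> cube n" "y n \<in> {-1, 1}"
    using y by (auto simp: cube_def less_Suc_eq)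
  then show "y \<in> (\<lambda>(x, b). x(n := b)) ` (cube n \<times> {-1, 1})"
    by (intro image_eqI[of _ _ "(y(n := 1), y n)"]) auto
qed (auto simp: cube_def less_Suc_eq)

lemma inj_on_cube_Suc: "inj_on (\<lambda>(x, b). x(n := b)) (cube n \<times> {-1, 1})"
proof (rule inj_onI, clarify)
  fix x b x' b' assume x: "x \<in> cube n" "x' \<in> cube n" and e: "x(n := b) = x'(n := b')"
  have "x i = x' i" for i
    using fun_cong[OF e, of i] x by (cases "i = n") (auto simp: cube_def)
  then show "x = x' \<and> b = b'"
    using fun_cong[OF e, of n] by auto
qed

lemma finite_cube: "finite (cube n)"
  by (induction n) (auto simp: cube_0 cube_Suc)

lemma sum_cube_prod:
  fixes g :: "nat \<Rightarrow> real \<Rightarrow> real"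
  shows "(\<Sum>x\<in>cube n. \<Prod>i<n. g i (x i)) = (\<Prod>i<n. g i (-1) + g i 1)"
proof (induction n)
  case 0
  then show ?case by (simp add: cube_0)
next
  case (Suc n)
  have upd: "(\<Prod>i<Suc n. g i ((x(n := b)) i)) = (\<Prod>i<n. g i (x i)) * g n b" for x b
  proof -
    have "(\<Prod>i<n. g i ((x(n := b)) i)) = (\<Prod>i<n. g i (x i))"
      by (rule prod.cong) auto
    then show ?thesis by (simp add: prod.lessThan_Suc)
  qed
  have "(\<Sum>x\<in>cube (Suc n). \<Prod>i<Suc n. g i (x i))
      = (\<Sum>p\<in>cube n \<times> {-1, 1}. \<Prod>i<Suc n. g i (((\<lambda>(x, b). x(n := b)) p) i))"
    by (simp only: cube_Suc sum.reindex[OF inj_on_cube_Suc] comp_def)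
  also have "\<dots> = (\<Sum>x\<in>cube n. \<Sum>b\<in>{-1, 1}. \<Prod>i<Suc n. g i ((x(n := b)) i))"
    unfolding sum.cartesian_product by (rule sum.cong) auto
  also have "\<dots> = (\<Sum>x\<in>cube n. (\<Prod>i<n. g i (x i)) * (g n (-1) + g n 1))"
    by (simp add: upd algebra_simps)
  finally show ?case
    by (simp only: sum_distrib_right[symmetric] Suc.IH prod.lessThan_Suc)
qed

lemma chi_in_fspace: "chi n S \<in> fspace n"
  by (simp add: chi_def fspace_def)

lemma sum_apply: "(\<Sum>i\<in>A. h i) x = (\<Sum>i\<in>A. (h i x :: real))"
  by (induction A rule: infinite_finite_induct) auto

lemma sum_in_fspace:
  "(\<And>T. T \<in> A \<Longrightarrow> h T \<in> fspace n) \<Longrightarrow> (\<Sum>T\<in>A. (\<lambda>x. c T * h T x)) \<in> fspace n"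
  by (simp add: fspace_def sum_apply)

lemma fourier_sum:
  "fourier n (\<Sum>T\<in>A. (\<lambda>x. c T * h T x)) S = (\<Sum>T\<in>A. c T * fourier n (h T) S)"
  by (simp add: fourier_def sum_apply sum_distrib_left sum_distrib_right sum_divide_distrib
      sum.swap[of _ A] mult.assoc)

lemma fourier_chi:
  assumes "S \<subseteq> {..<n}" "T \<subseteq> {..<n}"
  shows "fourier n (chi n T) S = (if S = T then 1 else 0)"
proof -
  let ?g = "\<lambda>i b. (if i \<in> T then b else 1) * (if i \<in> S then b else (1::real))"
  have restrict: "(\<Prod>i\<in>A. x i) = (\<Prod>i<n. if i \<in> A then x i else 1)"
    if "A \<subseteq> {..<n}" for A and x :: "nat \<Rightarrow> real"
    using prod.inter_restrict[of "{..<n}" x A] that by (simp add: Int_absorb1)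
  have "(\<Sum>x\<in>cube n. chi n T x * chi n S x) = (\<Sum>x\<in>cube n. \<Prod>i<n. ?g i (x i))"
    using restrict[OF assms(1)] restrict[OF assms(2)] by (simp add: chi_def prod.distrib)
  also have "\<dots> = (\<Prod>i<n. ?g i (-1) + ?g i 1)"
    by (rule sum_cube_prod)
  also have "\<dots> = (if S = T then 2 ^ n else 0)"
  proof (cases "S = T")
    case False
    then obtain i where "i \<in> S \<longleftrightarrow> i \<notin> T" by blast
    moreover from this have "i < n" using assms by blast
    ultimately have "(\<Prod>i<n. ?g i (-1) + ?g i 1) = 0"
      by (intro prod_zero bexI[of _ i]) auto
    with False show ?thesis by simp
  next
    case True
    then have "\<And>i. ?g i (-1) + ?g i 1 = 2" by simp
    with True show ?thesis by simp
  qed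
  finally show ?thesis by (simp add: fourier_def)
qed

text \<open>The reproducing kernel of the characters: \<open>\<Sum>\<^sub>S \<chi>\<^sub>S(x) \<chi>\<^sub>S(y) = \<Prod>\<^sub>i (1 + x\<^sub>i y\<^sub>i)\<close>.\<close>
lemma sum_chi_mult_chi:
  assumes "x \<in> cube n" "y \<in> cube n"
  shows "(\<Sum>S\<in>Pow {..<n}. chi n S x * chi n S y) = (if x = y then 2 ^ n else 0)"
proof -
  have "(\<Sum>S\<in>Pow {..<n}. chi n S x * chi n S y)
      = (\<Sum>S\<in>Pow {..<n}. (\<Prod>i\<in>S. x i * y i) * (\<Prod>i\<in>{..<n} - S. 1))"
    using assms by (simp add: chi_def prod.distrib)
  also have "\<dots> = (\<Prod>i<n. x i * y i + 1)"
    by (rule prod_add[symmetric]) simp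
  also have "\<dots> = (if x = y then 2 ^ n else 0)"
  proof (cases "x = y")
    case True
    have "\<And>i. i < n \<Longrightarrow> y i * y i + 1 = 2"
      using assms(2) by (auto simp: cube_def)
    with True show ?thesis by simp
  next
    case False
    then obtain i where i: "x i \<noteq> y i" by blast
    have "i < n"
      using assms i by (cases "i < n") (auto simp: cube_def)
    then have "x i * y i + 1 = 0"
      using assms i by (fastforce simp: cube_def)
    with \<open>i < n\<close> have "(\<Prod>i<n. x i * y i + 1) = 0"
      by (intro prod_zero bexI[of _ i]) auto
    with False show ?thesis by simp
  qed
  finally show ?thesis .
qed

theorem fourier_expansion:
  assumes "f \<in> fspace n"
  shows "f = (\<Sum>S\<in>Pow {..<n}. (\<lambda>x. fourier n f S * chi n S x))"
proof
  fix y
  show "f y = (\<Sum>S\<in>Pow {..<n}. (\<lambda>x. fourier n f S * chi n S x)) y"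
  proof (cases "y \<in> cube n")
    case False
    then show ?thesis using assms by (simp add: sum_apply chi_def fspace_def)
  next
    case True
    have "(\<Sum>S\<in>Pow {..<n}. (\<lambda>x. fourier n f S * chi n S x)) y
        = (\<Sum>x\<in>cube n. f x / 2 ^ n * (\<Sum>S\<in>Pow {..<n}. chi n S x * chi n S y))"
      by (simp add: sum_apply fourier_def sum_distrib_left sum_distrib_right sum_divide_distrib
          mult.assoc sum.swap[of _ "Pow {..<n}"])
    also have "\<dots> = (\<Sum>x\<in>cube n. if x = y then f y else 0)"
      by (rule sum.cong[OF refl]) (simp add: sum_chi_mult_chi True)
    also have "\<dots> = f y"
      using True finite_cube by simp
    finally show ?thesis by simp
  qed
qed

lemma inj_on_chi: "inj_on (chi n) (Pow {..<n})"
proof (rule inj_onI)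
  fix S T assume "S \<in> Pow {..<n}" "T \<in> Pow {..<n}" "chi n S = chi n T"
  then show "S = T"
    using fourier_chi[of S n S] fourier_chi[of S n T] by (auto split: if_splits)
qed

lemma fourier_sum_chi:
  assumes "A \<subseteq> Pow {..<n}" "S \<subseteq> {..<n}"
  shows "fourier n (\<Sum>v\<in>chi n ` A. (\<lambda>x. u v * v x)) S = (if S \<in> A then u (chi n S) else 0)"
proof -
  have "finite A"
    using assms(1) finite_subset by blast
  have "fourier n (\<Sum>v\<in>chi n ` A. (\<lambda>x. u v * v x)) S = (\<Sum>T\<in>A. u (chi n T) * fourier n (chi n T) S)"
    using inj_on_subset[OF inj_on_chi assms(1)] by (simp add: sum.reindex fourier_sum)
  also have "\<dots> = (\<Sum>T\<in>A. if S = T then u (chi n T) else 0)"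
  proof (rule sum.cong[OF refl])
    fix T assume "T \<in> A"
    then have "T \<subseteq> {..<n}" using assms(1) by blast
    then show "u (chi n T) * fourier n (chi n T) S = (if S = T then u (chi n T) else 0)"
      using fourier_chi[OF assms(2)] by simp
  qed
  finally show ?thesis
    using \<open>finite A\<close> by simp
qed

lemma finite_degrees:
  fixes n :: nat
  shows "finite ({card S | S. S \<subseteq> {..<n} \<and> P S} \<union> {0})"
proof -
  have "{card S | S. S \<subseteq> {..<n} \<and> P S} \<subseteq> card ` Pow {..<n}"
    by auto
  then have "finite {card S | S. S \<subseteq> {..<n} \<and> P S}"
    by (rule finite_subset) simp
  then show ?thesis by simp
qed

lemma card_le_deg: "S \<subseteq> {..<n} \<Longrightarrow> fourier n f S \<noteq> 0 \<Longrightarrow> card S \<le> deg n f"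
  unfolding deg_def by (rule Max_ge[OF finite_degrees]) blast

lemma deg_le: "(\<And>S. S \<subseteq> {..<n} \<Longrightarrow> fourier n f S \<noteq> 0 \<Longrightarrow> card S \<le> d) \<Longrightarrow> deg n f \<le> d"
  unfolding deg_def by (subst Max_le_iff[OF finite_degrees]) auto

lemma deg_chi: "S \<subseteq> {..<n} \<Longrightarrow> deg n (chi n S) = card S"
  by (intro antisym deg_le card_le_deg) (auto simp: fourier_chi split: if_splits)

interpretation fv: vector_space "\<lambda>c (g :: (nat \<Rightarrow> real) \<Rightarrow> real) x. c * g x"
  by unfold_locales (auto simp: fun_eq_iff algebra_simps)

lemma subspace_fspace: "fv.subspace (fspace n)"
  by (auto simp: fv.subspace_def fspace_def)

lemma (in vector_space) span_subset_span_independent: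
  assumes "finite B" "independent C" "C \<subseteq> span B" "card B \<le> card C"
  shows "span B \<subseteq> span C"
proof (rule span_minimal[OF _ subspace_span], rule subsetI, rule ccontr)
  fix b assume "b \<in> B" "b \<notin> span C"
  then have "independent (insert b C)" "insert b C \<subseteq> span B" "b \<notin> C"
    using assms span_base independent_insertI by blast+
  with independent_span_bound[OF assms(1)] assms(4) show False
    by (metis card_insert_disjoint finite_insert not_less_eq_eq)
qed

definition characters_upto :: "nat \<Rightarrow> nat \<Rightarrow> ((nat \<Rightarrow> real) \<Rightarrow> real) set" where
  "characters_upto n d = chi n ` {T. T \<subseteq> {..<n} \<and> card T \<le> d}"

lemma finite_characters_upto: "finite (characters_upto n d)"
  unfolding characters_upto_def by (rule finite_imageI, rule finite_subset[of _ "Pow {..<n}"]) auto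

lemma characters_upto_fspace: "characters_upto n d \<subseteq> fspace n"
  unfolding characters_upto_def using chi_in_fspace by blast

lemma independent_characters_upto: "fv.independent (characters_upto n d)"
proof
  let ?A = "{T. T \<subseteq> {..<n} \<and> card T \<le> d}"
  assume "fv.dependent (characters_upto n d)"
  then obtain u T where T: "T \<in> ?A" "u (chi n T) \<noteq> 0"
    and "(\<Sum>v\<in>chi n ` ?A. (\<lambda>x. u v * v x)) = 0"
    using fv.dependent_finite[OF finite_characters_upto] by (auto simp: characters_upto_def)
  then have "fourier n 0 T = u (chi n T)"
    using fourier_sum_chi[of ?A n T u] by auto
  with T show False
    by (simp add: fourier_def)
qed

lemma in_span_characters_upto_iff:
  assumes "f \<in> fspace n"
  shows "f \<in> fv.span (characters_upto n d) \<longleftrightarrow> deg n f \<le> d"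
proof
  let ?A = "{T. T \<subseteq> {..<n} \<and> card T \<le> d}"
  assume "f \<in> fv.span (characters_upto n d)"
  then obtain u where f: "f = (\<Sum>v\<in>chi n ` ?A. (\<lambda>x. u v * v x))"
    using fv.span_finite[OF finite_characters_upto] by (auto simp: characters_upto_def)
  have "?A \<subseteq> Pow {..<n}"
    by auto
  then have "fourier n f S = (if card S \<le> d then u (chi n S) else 0)" if "S \<subseteq> {..<n}" for S
    using fourier_sum_chi[OF _ that, of ?A u] that unfolding f by auto
  then show "deg n f \<le> d"
    by (intro deg_le) (auto split: if_splits)
next
  assume "deg n f \<le> d"
  have "(\<lambda>x. fourier n f S * chi n S x) \<in> fv.span (characters_upto n d)" if "S \<in> Pow {..<n}" for S
  proof (cases "fourier n f S = 0")
    case False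
    then have "chi n S \<in> characters_upto n d"
      using that card_le_deg[of S n f] \<open>deg n f \<le> d\<close> by (auto simp: characters_upto_def)
    then show ?thesis by (intro fv.span_scale fv.span_base)
  qed (use fv.span_zero in \<open>simp add: zero_fun_def\<close>)
  then show "f \<in> fv.span (characters_upto n d)"
    by (subst fourier_expansion[OF assms]) (rule fv.span_sum)
qed

context
  fixes n :: nat and U :: "((nat \<Rightarrow> real) \<Rightarrow> real) \<Rightarrow> (nat \<Rightarrow> real) \<Rightarrow> real"
  assumes U: "basis_transform n U"
begin

lemma inj_on_transform: "inj_on U (fspace n)"
  and image_transform: "U ` fspace n = fspace n"
  using U unfolding basis_transform_def bij_betw_def by auto

lemma transform_add: "f \<in> fspace n \<Longrightarrow> g \<in> fspace n \<Longrightarrow> U (f + g) = U f + U g"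
  using U unfolding basis_transform_def plus_fun_def by blast

lemma transform_scale: "f \<in> fspace n \<Longrightarrow> U (\<lambda>x. c * f x) = (\<lambda>x. c * U f x)"
  using U unfolding basis_transform_def by blast

lemma transform_zero: "U 0 = 0"
  using transform_scale[of 0 0] by (simp add: fspace_def zero_fun_def)

lemma transform_sum:
  assumes "\<And>T. T \<in> A \<Longrightarrow> h T \<in> fspace n"
  shows "U (\<Sum>T\<in>A. (\<lambda>x. c T * h T x)) = (\<Sum>T\<in>A. (\<lambda>x. c T * U (h T) x))"
  using assms
proof (induction A rule: infinite_finite_induct)
  case (insert a A)
  have ha: "h a \<in> fspace n"
    using insert.prems by simp
  have "(\<Sum>T\<in>A. (\<lambda>x. c T * h T x)) \<in> fspace n"
    using insert.prems by (intro sum_in_fspace) auto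
  moreover have "(\<lambda>x. c a * h a x) \<in> fspace n"
    using ha by (simp add: fspace_def)
  moreover have "U (\<Sum>T\<in>A. (\<lambda>x. c T * h T x)) = (\<Sum>T\<in>A. (\<lambda>x. c T * U (h T) x))"
    using insert by simp
  ultimately show ?case
    by (simp only: sum.insert[OF insert.hyps] transform_add transform_scale[OF ha])
qed (simp_all add: transform_zero)

lemma transform_image_span:
  assumes "finite B" "B \<subseteq> fspace n"
  shows "U ` fv.span B = fv.span (U ` B)"
proof
  show "U ` fv.span B \<subseteq> fv.span (U ` B)"
  proof clarify
    fix f assume "f \<in> fv.span B"
    then obtain u where "f = (\<Sum>b\<in>B. (\<lambda>x. u b * b x))"
      using fv.span_finite[OF assms(1)] by auto
    then have "U f = (\<Sum>b\<in>B. (\<lambda>x. u b * U b x))"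
      using assms(2) transform_sum[of B "\<lambda>b. b"] by auto
    also have "\<dots> \<in> fv.span (U ` B)"
      by (intro fv.span_sum fv.span_scale fv.span_base) auto
    finally show "U f \<in> fv.span (U ` B)" .
  qed
  show "fv.span (U ` B) \<subseteq> U ` fv.span B"
  proof
    fix f assume "f \<in> fv.span (U ` B)"
    then obtain w where "f = (\<Sum>v\<in>U ` B. (\<lambda>x. w v * v x))"
      using fv.span_finite[OF finite_imageI[OF assms(1)]] by auto
    also have "\<dots> = U (\<Sum>b\<in>B. (\<lambda>x. w (U b) * b x))"
      using assms(2) transform_sum[of B "\<lambda>b. b"]
      by (simp add: sum.reindex[OF inj_on_subset[OF inj_on_transform assms(2)]] subset_iff)
    finally have "f = U (\<Sum>b\<in>B. (\<lambda>x. w (U b) * b x))" .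
    moreover have "(\<Sum>b\<in>B. (\<lambda>x. w (U b) * b x)) \<in> fv.span B"
      by (intro fv.span_sum fv.span_scale fv.span_base)
    ultimately show "f \<in> U ` fv.span B"
      by (rule image_eqI)
  qed
qed

lemma independent_transform_image:
  assumes "finite B" "B \<subseteq> fspace n" "fv.independent B"
  shows "fv.independent (U ` B)"
proof
  have inj: "inj_on U B"
    using inj_on_subset[OF inj_on_transform assms(2)] .
  assume "fv.dependent (U ` B)"
  then obtain u b where b: "b \<in> B" "u (U b) \<noteq> 0" and "(\<Sum>v\<in>U ` B. (\<lambda>x. u v * v x)) = 0"
    unfolding fv.dependent_finite[OF finite_imageI[OF assms(1)]] by blast
  moreover have "U (\<Sum>b\<in>B. (\<lambda>x. u (U b) * b x)) = (\<Sum>b\<in>B. (\<lambda>x. u (U b) * U b x))"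
    using assms(2) by (intro transform_sum) auto
  ultimately have "U (\<Sum>b\<in>B. (\<lambda>x. u (U b) * b x)) = U 0"
    by (simp add: sum.reindex[OF inj] transform_zero)
  moreover have "(\<Sum>b\<in>B. (\<lambda>x. u (U b) * b x)) \<in> fspace n"
    using assms(2) by (intro sum_in_fspace) auto
  moreover have "(0 :: (nat \<Rightarrow> real) \<Rightarrow> real) \<in> fspace n"
    by (simp add: fspace_def)
  ultimately have "(\<Sum>b\<in>B. (\<lambda>x. u (U b) * b x)) = 0"
    using inj_onD[OF inj_on_transform] by blast
  with b have "fv.dependent B"
    unfolding fv.dependent_finite[OF assms(1)] by (intro exI[of _ "\<lambda>b. u (U b)"]) auto
  with assms(3) show False ..
qed

text \<open>U ` B is independent and has as many elements as B, so it spans span B.\<close>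
lemma transform_span_invariant:
  assumes "finite B" "B \<subseteq> fspace n" "fv.independent B" "U ` B \<subseteq> fv.span B"
  shows "U ` fv.span B = fv.span B"
proof -
  have "card (U ` B) = card B"
    using card_image[OF inj_on_subset[OF inj_on_transform assms(2)]] .
  then have "fv.span B \<subseteq> fv.span (U ` B)"
    using independent_transform_image[OF assms(1-3)] assms(1,4)
    by (intro fv.span_subset_span_independent) simp_all
  moreover have "fv.span (U ` B) \<subseteq> fv.span B"
    using assms(4) by (simp add: fv.span_minimal)
  ultimately show ?thesis
    using transform_image_span[OF assms(1,2)] by simp
qed

lemma deg_inv_transform_chi:
  assumes "compatible n U" "S \<subseteq> {..<n}"
  shows "deg n (inv_into (fspace n) U (chi n S)) = card S"
proof -
  define g where "g = inv_into (fspace n) U (chi n S)"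
  have g: "g \<in> fspace n" "U g = chi n S"
    unfolding g_def using chi_in_fspace image_transform
    by (metis inv_into_into, metis f_inv_into_f)
  have invariant: "U ` fv.span (characters_upto n d) = fv.span (characters_upto n d)" for d
  proof (rule transform_span_invariant)
    show "U ` characters_upto n d \<subseteq> fv.span (characters_upto n d)"
    proof
      fix v assume "v \<in> U ` characters_upto n d"
      then obtain T where T: "T \<subseteq> {..<n}" "card T \<le> d" and v: "v = U (chi n T)"
        by (auto simp: characters_upto_def)
      have "v \<in> fspace n"
        using v image_transform chi_in_fspace by blast
      moreover have "deg n v \<le> d"
        using assms(1) T v by (simp add: compatible_def)
      ultimately show "v \<in> fv.span (characters_upto n d)"
        using in_span_characters_upto_iff by blast
    qed
  qed (simp_all add: finite_characters_upto characters_upto_fspace independent_characters_upto)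
  have span_fspace: "fv.span (characters_upto n d) \<subseteq> fspace n" for d
    by (simp add: fv.span_minimal characters_upto_fspace subspace_fspace)
  have "chi n S \<in> fv.span (characters_upto n (card S))"
    using assms(2) by (auto simp: characters_upto_def intro: fv.span_base)
  then have "chi n S \<in> U ` fv.span (characters_upto n (card S))"
    by (simp only: invariant)
  then obtain h where h: "h \<in> fv.span (characters_upto n (card S))" "U h = U g"
    using g(2) by auto
  have "h = g"
    using h g(1) span_fspace inj_onD[OF inj_on_transform] by blast
  then have upper: "deg n g \<le> card S"
    using h(1) g(1) in_span_characters_upto_iff by blast
  have "U g \<in> fv.span (characters_upto n (deg n g))"
    using g(1) in_span_characters_upto_iff[of g n "deg n g"] invariant by blast
  then have "card S \<le> deg n g"
    using g(2) assms(2) chi_in_fspace deg_chi in_span_characters_upto_iff by metis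
  with upper show ?thesis
    unfolding g_def by simp
qed

end

theorem mainTheorem15:
  fixes n :: nat and U :: "((nat \<Rightarrow> real) \<Rightarrow> real) \<Rightarrow> ((nat \<Rightarrow> real) \<Rightarrow> real)"
    and f :: "(nat \<Rightarrow> real) \<Rightarrow> real"
  assumes "basis_transform n U" and "compatible n U" and "f \<in> fspace n"
  shows "degU n U f = deg n f"
proof -
  have "{deg n (inv_into (fspace n) U (chi n S)) | S. S \<subseteq> {..<n} \<and> fourier n f S \<noteq> 0}
      = {card S | S. S \<subseteq> {..<n} \<and> fourier n f S \<noteq> 0}"
    unfolding setcompr_eq_image
    by (rule image_cong[OF refl]) (simp add: deg_inv_transform_chi[OF assms(1,2)])
  then show ?thesis
    unfolding degU_def deg_def by simp
qed

end
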